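(* Let $\langle-,-\rangle$ be a cyclic form on $C$. If $v\notin\mathrm{Span}\{v_1,\dots,v_n,w_1,\dots,w_l\}$, then $$\langle\mu(v_1,\dots,v_n,v),\mu(w_1,\dots,w_l)\rangle=\langle\mu(v_1,\dots,v_n),\mu(v,w_1,\dots,w_l)\rangle.$$
   Context: $k$ is a field of characteristic zero, $V$ a $k$-vector space of dimension $m\ge1$ in degree $0$, $A=\mathrm{Sym}(V)$, and $C=A^{\textup{!`}}$ the exterior coalgebra on $sV$ with elements $\mu(v_1,\dots,v_n)=sv_1\wedge\cdots\wedge sv_n$ (the vectors in each such expression taken linearly independent), counit element $e$, and coproduct $\triangle\mu(v_1,\dots,v_n)=\sum_{p=0}^n\sum_{\sigma\in Sh_{p,n-p}}\mathrm{sgn}(\sigma)\mu(v_{\sigma(1)},\dots,v_{\sigma(p)})\otimes\mu(v_{\sigma(p+1)},\dots,v_{\sigma(n)})$. A symmetric bilinear form of degree $-d$ on $C$ is $\langle-,-\rangle:C\otimes C\to k[d]$ with $\langle a,b\rangle=(-1)^{|a||b|}\langle b,a\rangle$; it is cyclic if $\sum\langle a,b^2\rangle b^1=\sum\langle a^1,b\rangle a^2$ for all $a,b$, where $\triangle(a)=\sum a^1\otimes a^2$, $\triangle(b)=\sum b^1\otimes b^2$. *)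

theory Defs
  imports "HOL-Analysis.Analysis"
begin

text \<open>
Model: V = k^m, vectors are functions nat => k supported in {..<m} (coordinates
w.r.t. a basis e_0,...,e_{m-1}).  C = Lambda(sV) has the basis
e_S = s e_{s_1} wedge ... wedge s e_{s_r}  for S = {s_1 < ... < s_r} subset {..<m};
an element of C is its coefficient function  nat set => k, supported on Pow {..<m}.
The degree of e_S is card S.
\<close>

definition vecV :: "nat \<Rightarrow> (nat \<Rightarrow> 'k::field) set" where
  "vecV m = {v. \<forall>i. m \<le> i \<longrightarrow> v i = 0}"

definition carrierC :: "nat \<Rightarrow> (nat set \<Rightarrow> 'k::field) set" where
  "carrierC m = {a. \<forall>S. \<not> S \<subseteq> {..<m} \<longrightarrow> a S = 0}"

definition basisC :: "nat set \<Rightarrow> nat set \<Rightarrow> 'k::field" where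
  "basisC S = (\<lambda>T. if T = S then 1 else 0)"

definition lincomb :: "(nat \<Rightarrow> 'k::field) \<Rightarrow> (nat \<Rightarrow> 'k) list \<Rightarrow> nat \<Rightarrow> 'k" where
  "lincomb c vs = (\<lambda>x. \<Sum>i<length vs. c i * (vs ! i) x)"

definition in_span :: "(nat \<Rightarrow> 'k::field) \<Rightarrow> (nat \<Rightarrow> 'k) list \<Rightarrow> bool" where
  "in_span v vs \<longleftrightarrow> (\<exists>c. v = lincomb c vs)"

definition lin_indep :: "(nat \<Rightarrow> 'k::field) list \<Rightarrow> bool" where
  "lin_indep vs \<longleftrightarrow> (\<forall>c. lincomb c vs = (\<lambda>x. 0) \<longrightarrow> (\<forall>i<length vs. c i = 0))"

text \<open>mu(v_1,...,v_n) = s v_1 wedge ... wedge s v_n : coefficient at e_S is the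
minor det[ v_i(s_j) ] (Leibniz formula).\<close>

definition mu :: "nat \<Rightarrow> (nat \<Rightarrow> 'k::field) list \<Rightarrow> nat set \<Rightarrow> 'k" where
  "mu m vs = (\<lambda>S. if S \<subseteq> {..<m} \<and> card S = length vs then
      (\<Sum>p | p permutes {..<length vs}.
          of_int (sign p) * (\<Prod>i<length vs. (vs ! i) (sorted_list_of_set S ! p i)))
    else 0)"

text \<open>Coproduct: Delta(e_{P \<union> Q}) contains e_P \<otimes> e_Q with the sign of the
(p,q)-shuffle, i.e. (-1)^(number of pairs p in P, q in Q with q < p).
An element of C \<otimes> C is a coefficient function on pairs of basis elements.\<close>

definition shuffle_sign :: "nat set \<Rightarrow> nat set \<Rightarrow> 'k::field" where
  "shuffle_sign P Q = (-1) ^ card {(p, q). p \<in> P \<and> q \<in> Q \<and> q < p}"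

definition coprod :: "(nat set \<Rightarrow> 'k::field) \<Rightarrow> nat set \<Rightarrow> nat set \<Rightarrow> 'k" where
  "coprod a P Q = (if P \<inter> Q = {} then shuffle_sign P Q * a (P \<union> Q) else 0)"

definition form :: "nat \<Rightarrow> (nat set \<Rightarrow> nat set \<Rightarrow> 'k::field) \<Rightarrow>
    (nat set \<Rightarrow> 'k) \<Rightarrow> (nat set \<Rightarrow> 'k) \<Rightarrow> 'k" where
  "form m g a b = (\<Sum>S\<in>Pow {..<m}. \<Sum>T\<in>Pow {..<m}. a S * b T * g S T)"

text \<open>Degree -d: <e_S, e_T> can only be nonzero if |e_S| + |e_T| = d.\<close>

definition of_degree :: "nat \<Rightarrow> int \<Rightarrow> (nat set \<Rightarrow> nat set \<Rightarrow> 'k::field) \<Rightarrow> bool" where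
  "of_degree m d g \<longleftrightarrow> (\<forall>S T. S \<subseteq> {..<m} \<and> T \<subseteq> {..<m} \<and> g S T \<noteq> 0
      \<longrightarrow> int (card S) + int (card T) = d)"

definition symmetric_form :: "nat \<Rightarrow> (nat set \<Rightarrow> nat set \<Rightarrow> 'k::field) \<Rightarrow> bool" where
  "symmetric_form m g \<longleftrightarrow> (\<forall>S T. S \<subseteq> {..<m} \<and> T \<subseteq> {..<m}
      \<longrightarrow> g S T = (-1) ^ (card S * card T) * g T S)"

text \<open>Cyclicity: sum <a,b^2> b^1 = sum <a^1,b> a^2 for all a, b in C.\<close>

definition cyclic_form :: "nat \<Rightarrow> (nat set \<Rightarrow> nat set \<Rightarrow> 'k::field) \<Rightarrow> bool" where
  "cyclic_form m g \<longleftrightarrow> (\<forall>a\<in>carrierC m. \<forall>b\<in>carrierC m.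
      (\<lambda>P. \<Sum>Q\<in>Pow {..<m}. coprod b P Q * form m g a (basisC Q))
    = (\<lambda>Q. \<Sum>P\<in>Pow {..<m}. coprod a P Q * form m g (basisC P) b))"

end

theory Submission
  imports Defs "Jordan_Normal_Form.Determinant" "HOL-Library.Function_Algebras"
begin

text \<open>
Since v lies outside the span of the v_i and w_j, there is a linear functional h on V with
h v = 1 that vanishes on all v_i and w_j. Contraction with h is a graded derivation of the
exterior coalgebra: on the coordinates of mu it is the Laplace expansion of a minor along one
column, so contracting mu(v, w_1, ..., w_l) on the left gives mu(w_1, ..., w_l), and
contracting mu(v_1, ..., v_n, v) on the right gives mu(v_1, ..., v_n). Cyclicity, read off at
the basis elements e_{i}, says precisely that left and right contraction are adjoint for the
form.
\<close>

section \<open>A functional separating a vector from a span\<close>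

definition fun_scale :: "'k::field \<Rightarrow> (nat \<Rightarrow> 'k) \<Rightarrow> nat \<Rightarrow> 'k" where
  "fun_scale c x = (\<lambda>j. c * x j)"

interpretation fun_space: vector_space "fun_scale :: 'k::field \<Rightarrow> _"
  by unfold_locales (auto simp: fun_scale_def algebra_simps fun_eq_iff)

interpretation fun_dual: vector_space_pair "fun_scale :: 'k::field \<Rightarrow> _" "(*) :: 'k \<Rightarrow> 'k \<Rightarrow> 'k"
  by unfold_locales (auto simp: fun_scale_def algebra_simps fun_eq_iff)

lemma sum_fun_apply: "(sum f A :: nat \<Rightarrow> 'k::comm_monoid_add) j = (\<Sum>i\<in>A. f i j)"
  by (induction A rule: infinite_finite_induct) auto

lemma subspace_in_span: "fun_space.subspace {x. in_span x L}"
  unfolding fun_space.subspace_def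
proof (intro conjI allI ballI impI)
  show "0 \<in> {x. in_span x L}"
    by (auto simp: in_span_def lincomb_def fun_eq_iff intro!: exI[of _ "\<lambda>_. 0"])
next
  fix x y assume "x \<in> {x. in_span x L}" "y \<in> {x. in_span x L}"
  then obtain c d where "x = lincomb c L" "y = lincomb d L" by (auto simp: in_span_def)
  then show "x + y \<in> {x. in_span x L}"
    by (auto simp: in_span_def lincomb_def fun_eq_iff algebra_simps sum.distrib
        intro!: exI[of _ "\<lambda>i. c i + d i"])
next
  fix a x assume "x \<in> {x. in_span x L}"
  then obtain c where "x = lincomb c L" by (auto simp: in_span_def)
  then show "fun_scale a x \<in> {x. in_span x L}"
    by (auto simp: fun_scale_def in_span_def lincomb_def fun_eq_iff algebra_simps
        sum_distrib_left intro!: exI[of _ "\<lambda>i. a * c i"])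
qed

lemma in_span_member:
  assumes "w \<in> set L"
  shows "in_span w L"
proof -
  obtain j where j: "j < length L" "L ! j = w"
    using assms by (auto simp: in_set_conv_nth)
  have "(if i = j then 1 else 0) * x = (if i = j then x else 0)" for i and x :: 'a
    by simp
  then have "lincomb (\<lambda>i. if i = j then 1 else 0) L = w"
    using j by (simp add: lincomb_def fun_eq_iff)
  then show ?thesis unfolding in_span_def by metis
qed

lemma in_span_of_span: "x \<in> fun_space.span (set L) \<Longrightarrow> in_span x L"
  using fun_space.span_induct[of x "set L" "\<lambda>x. in_span x L"] subspace_in_span in_span_member
  by auto

lemma linear_functional_coordinates:
  assumes f: "Vector_Spaces.linear fun_scale (*) f" and x: "x \<in> vecV m"
  shows "f x = (\<Sum>i<m. f (\<lambda>j. if j = i then 1 else 0) * x i)"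
proof -
  have "x = (\<Sum>i<m. fun_scale (x i) (\<lambda>j. if j = i then 1 else 0))"
    using x by (auto simp: fun_eq_iff fun_scale_def sum_fun_apply vecV_def if_distrib
        cong: if_cong)
  then have "f x = f (\<Sum>i<m. fun_scale (x i) (\<lambda>j. if j = i then 1 else 0))" by simp
  also have "\<dots> = (\<Sum>i<m. x i * f (\<lambda>j. if j = i then 1 else 0))"
    by (simp add: fun_dual.linear_sum[OF f] fun_dual.linear_scale[OF f])
  finally show ?thesis by (simp add: mult.commute)
qed

lemma separating_functional:
  assumes L: "set L \<subseteq> vecV m" and v: "v \<in> vecV m" and v_notin: "\<not> in_span v L"
  shows "\<exists>h. (\<Sum>i<m. h i * v i) = 1 \<and> (\<forall>w\<in>set L. (\<Sum>i<m. h i * w i) = 0)"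
proof -
  obtain B where B: "B \<subseteq> set L" "fun_space.independent B" "set L \<subseteq> fun_space.span B"
    using fun_space.maximal_independent_subset by blast
  have "v \<notin> fun_space.span B"
    using v_notin fun_space.span_mono[OF B(1)] in_span_of_span by blast
  then have "v \<notin> B" "fun_space.independent (insert v B)"
    using fun_space.span_base fun_space.independent_insertI B(2) by blast+
  then obtain f where f: "Vector_Spaces.linear fun_scale (*) f"
    and f_v: "f v = 1" and f_B: "\<And>x. x \<in> B \<Longrightarrow> f x = 0"
    using fun_dual.linear_independent_extend[of "insert v B" "\<lambda>x. if x = v then 1 else 0"]
    by fastforce
  have f_L: "f w = 0" if "w \<in> set L" for w
    using fun_dual.linear_eq_0_on_span[OF f f_B] B(3) that by blast
  define h where "h i = f (\<lambda>j. if j = i then 1 else 0)" for i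
  show ?thesis
    using linear_functional_coordinates[OF f] v L f_v f_L unfolding h_def[symmetric]
    by (metis subsetD)
qed

section \<open>Minors and their Laplace expansion\<close>

definition remove_nth :: "nat \<Rightarrow> 'a list \<Rightarrow> 'a list" where
  "remove_nth r xs = take r xs @ drop (Suc r) xs"

lemma length_remove_nth [simp]: "r < length xs \<Longrightarrow> length (remove_nth r xs) = length xs - 1"
  by (simp add: remove_nth_def)

lemma nth_remove_nth:
  "r < length xs \<Longrightarrow> i < length xs - 1 \<Longrightarrow> remove_nth r xs ! i = xs ! (if i < r then i else Suc i)"
  by (auto simp: remove_nth_def nth_append min_def)

definition minor_mat :: "(nat \<Rightarrow> 'k::comm_ring_1) list \<Rightarrow> nat list \<Rightarrow> 'k mat" where
  "minor_mat us cs = mat (length us) (length cs) (\<lambda>(r, j). (us ! r) (cs ! j))"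

definition minor :: "(nat \<Rightarrow> 'k::comm_ring_1) list \<Rightarrow> nat list \<Rightarrow> 'k" where
  "minor us cs = det (minor_mat us cs)"

lemma mu_eq_minor:
  "mu m us S = (if S \<subseteq> {..<m} \<and> card S = length us then minor us (sorted_list_of_set S) else 0)"
proof (cases "S \<subseteq> {..<m} \<and> card S = length us")
  case True
  then have "finite S" using finite_subset by blast
  let ?L = "sorted_list_of_set S" and ?n = "length us"
  have len: "length ?L = ?n" using True \<open>finite S\<close> by simp
  have "minor us ?L = (\<Sum>p | p permutes {..<?n}. of_int (sign p) *
          (\<Prod>i<?n. minor_mat us ?L $$ (i, p i)))"
    unfolding minor_def det_def using True by (simp add: minor_mat_def len atLeast0LessThan)
  also have "\<dots> = (\<Sum>p | p permutes {..<?n}. of_int (sign p) * (\<Prod>i<?n. (us ! i) (?L ! p i)))"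
  proof (rule sum.cong[OF refl])
    fix p assume "p \<in> {p. p permutes {..<?n}}"
    then have "p i < ?n" if "i < ?n" for i
      using permutes_in_image that by fastforce
    then have "(\<Prod>i<?n. minor_mat us ?L $$ (i, p i)) = (\<Prod>i<?n. (us ! i) (?L ! p i))"
      using len by (intro prod.cong refl) (simp add: minor_mat_def)
    then show "of_int (sign p) * (\<Prod>i<?n. minor_mat us ?L $$ (i, p i))
        = of_int (sign p) * (\<Prod>i<?n. (us ! i) (?L ! p i))" by simp
  qed
  finally show ?thesis using True by (simp add: mu_def)
next
  case False
  then show ?thesis unfolding mu_def by (simp only: if_False)
qed

lemma mat_delete_minor_mat:
  assumes r: "r < length us" and len: "length us = Suc (length L1 + length L2)"
  shows "mat_delete (minor_mat us (L1 @ c # L2)) r (length L1) = minor_mat (remove_nth r us) (L1 @ L2)"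
proof (rule eq_matI)
  fix i j assume i: "i < dim_row (minor_mat (remove_nth r us) (L1 @ L2))"
    and j: "j < dim_col (minor_mat (remove_nth r us) (L1 @ L2))"
  have "(L1 @ c # L2) ! (if j < length L1 then j else Suc j) = (L1 @ L2) ! j"
    using j by (auto simp: minor_mat_def nth_append)
  then show "mat_delete (minor_mat us (L1 @ c # L2)) r (length L1) $$ (i, j)
      = minor_mat (remove_nth r us) (L1 @ L2) $$ (i, j)"
    using i j r len by (auto simp: mat_delete_def minor_mat_def nth_remove_nth)
qed (use r in \<open>simp_all add: minor_mat_def\<close>)

lemma minor_laplace_column:
  assumes len: "length us = Suc (length L1 + length L2)"
  shows "minor us (L1 @ c # L2)
    = (\<Sum>r<length us. (-1) ^ (r + length L1) * (us ! r) c * minor (remove_nth r us) (L1 @ L2))"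
proof -
  let ?A = "minor_mat us (L1 @ c # L2)"
  have "?A \<in> carrier_mat (length us) (length us)"
    using len by (simp add: minor_mat_def)
  then have "minor us (L1 @ c # L2) = (\<Sum>r<length us. ?A $$ (r, length L1) * cofactor ?A r (length L1))"
    unfolding minor_def by (rule laplace_expansion_column) (simp add: len)
  also have "\<dots> = (\<Sum>r<length us. (-1) ^ (r + length L1) * (us ! r) c * minor (remove_nth r us) (L1 @ L2))"
  proof (intro sum.cong refl)
    fix r assume "r \<in> {..<length us}"
    then have r: "r < length us" by simp
    have "?A $$ (r, length L1) = (us ! r) c"
      using r len by (simp add: minor_mat_def nth_append)
    then show "?A $$ (r, length L1) * cofactor ?A r (length L1)
        = (-1) ^ (r + length L1) * (us ! r) c * minor (remove_nth r us) (L1 @ L2)"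
      unfolding cofactor_def mat_delete_minor_mat[OF r len] minor_def by simp
  qed
  finally show ?thesis .
qed

lemma minor_repeated_column:
  assumes len: "length us = Suc (length L)" and i: "i \<in> set L"
  shows "minor us (i # L) = 0"
proof -
  obtain k where k: "k < length L" "L ! k = i"
    using i by (auto simp: in_set_conv_nth)
  have "minor_mat us (i # L) \<in> carrier_mat (length us) (length us)"
    using len by (simp add: minor_mat_def)
  then show ?thesis unfolding minor_def
    by (rule det_identical_columns[of _ _ 0 "Suc k"]) (use k len in \<open>auto simp: minor_mat_def\<close>)
qed

section \<open>The coproduct against a single basis vector\<close>

lemma sorted_list_of_set_insert_split:
  assumes fin: "finite Q" and i: "i \<notin> Q"
  defines "L \<equiv> sorted_list_of_set Q"
  shows "sorted_list_of_set (insert i Q) = filter (\<lambda>q. q < i) L @ i # filter (\<lambda>q. i < q) L"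
    and "filter (\<lambda>q. q < i) L @ filter (\<lambda>q. i < q) L = L"
proof -
  have L: "sorted_wrt (<) L" "distinct L" "set L = Q" using fin by (auto simp: L_def)
  let ?L1 = "filter (\<lambda>q. q < i) L" and ?L2 = "filter (\<lambda>q. i < q) L"
  have sorted: "sorted_wrt (<) (?L1 @ i # ?L2)" "sorted_wrt (<) (?L1 @ ?L2)"
    using L(1) by (auto simp: sorted_wrt_append sorted_wrt_filter)
  have set: "set (?L1 @ i # ?L2) = insert i Q" "set (?L1 @ ?L2) = Q"
    using L(3) i by (auto simp: linorder_neq_iff dest: mk_disjoint_insert)
  show "sorted_list_of_set (insert i Q) = ?L1 @ i # ?L2"
    by (rule sym, rule strict_sorted_equal[OF strict_sorted_list_of_set sorted(1)])
      (use set(1) fin in \<open>metis finite_insert set_sorted_list_of_set\<close>)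
  show "?L1 @ ?L2 = L"
    using strict_sorted_equal[OF strict_sorted_list_of_set sorted(2), of Q] set(2) fin
    by (simp add: L_def)
qed

lemma shuffle_sign_singleton:
  assumes "finite Q"
  shows "shuffle_sign {i} Q = (-1) ^ length (filter (\<lambda>q. q < i) (sorted_list_of_set Q))"
proof -
  have "{(p, q). p \<in> {i} \<and> q \<in> Q \<and> q < p} = (\<lambda>q. (i, q)) ` {q \<in> Q. q < i}" by auto
  then have "card {(p, q). p \<in> {i} \<and> q \<in> Q \<and> q < p} = card {q \<in> Q. q < i}"
    by (simp add: card_image inj_on_def)
  also have "\<dots> = length (filter (\<lambda>q. q < i) (sorted_list_of_set Q))"
    using assms distinct_card[of "filter (\<lambda>q. q < i) (sorted_list_of_set Q)"] by simp
  finally show ?thesis by (simp add: shuffle_sign_def)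
qed

lemma coprod_singleton_swap:
  assumes "finite P"
  shows "coprod a P {i} = (-1) ^ card P * coprod a {i} P"
proof (cases "i \<in> P")
  case False
  have "{(p, q). p \<in> P \<and> q \<in> {i} \<and> q < p} = (\<lambda>p. (p, i)) ` {p \<in> P. i < p}"
    "{(p, q). p \<in> {i} \<and> q \<in> P \<and> q < p} = (\<lambda>q. (i, q)) ` {q \<in> P. q < i}" by force+
  then have cards: "card {(p, q). p \<in> P \<and> q \<in> {i} \<and> q < p} = card {p \<in> P. i < p}"
    "card {(p, q). p \<in> {i} \<and> q \<in> P \<and> q < p} = card {q \<in> P. q < i}"
    by (simp_all add: card_image inj_on_def)
  have "P = {p \<in> P. i < p} \<union> {q \<in> P. q < i}"
    using False by (auto simp: linorder_neq_iff dest: mk_disjoint_insert)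
  then have "card P = card {p \<in> P. i < p} + card {q \<in> P. q < i}"
    using assms by (metis (no_types, lifting) card_Un_disjoint finite_Un disjoint_iff mem_Collect_eq not_less_iff_gr_or_eq)
  then have "shuffle_sign P {i} = ((-1) ^ card P * shuffle_sign {i} P :: 'a)"
    unfolding shuffle_sign_def cards by (simp add: power_add mult.assoc flip: power2_eq_square power_mult)
  then show ?thesis
    using False by (simp add: coprod_def Un_commute Int_commute mult.assoc)
qed (simp add: coprod_def)

lemma coprod_singleton_mu_eq_0:
  assumes "\<not> (Q \<subseteq> {..<m} \<and> Suc (card Q) = length us)"
  shows "coprod (mu m us) {i} Q = 0"
  using assms by (cases "finite Q") (auto simp: coprod_def mu_def dest: finite_subset)

text \<open>For i \<in> Q both sides vanish: the left by definition of coprod, the right because it expands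
a minor with a repeated column.\<close>

lemma coprod_singleton_mu:
  assumes len: "length us = Suc n" and Q: "Q \<subseteq> {..<m}" and card_Q: "card Q = n" and i: "i < m"
  shows "coprod (mu m us) {i} Q
    = (\<Sum>r<Suc n. (-1) ^ r * (us ! r) i * minor (remove_nth r us) (sorted_list_of_set Q))"
proof -
  have fin: "finite Q" using Q finite_subset by blast
  let ?L = "sorted_list_of_set Q"
  have len_L: "length ?L = n" using fin card_Q by simp
  show ?thesis
  proof (cases "i \<in> Q")
    case True
    have "(\<Sum>r<Suc n. (-1) ^ r * (us ! r) i * minor (remove_nth r us) ?L) = minor us ([] @ i # ?L)"
      using minor_laplace_column[of us "[]" ?L i] len len_L by simp
    also have "\<dots> = 0" using minor_repeated_column[of us ?L i] len len_L True fin by simp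
    finally show ?thesis using True by (simp add: coprod_def)
  next
    case False
    let ?L1 = "filter (\<lambda>q. q < i) ?L" and ?L2 = "filter (\<lambda>q. i < q) ?L"
    note split = sorted_list_of_set_insert_split[OF fin False]
    have len_12: "length ?L1 + length ?L2 = n"
      using split(2) len_L by (metis length_append)
    have "coprod (mu m us) {i} Q = (-1) ^ length ?L1 * mu m us (insert i Q)"
      using False by (simp add: coprod_def shuffle_sign_singleton[OF fin])
    also have "mu m us (insert i Q) = minor us (?L1 @ i # ?L2)"
      using Q i fin False card_Q len split(1) by (simp add: mu_eq_minor)
    also have "\<dots> = (\<Sum>r<Suc n. (-1) ^ (r + length ?L1) * (us ! r) i * minor (remove_nth r us) ?L)"
      using minor_laplace_column[of us ?L1 ?L2 i] len len_12 split(2) by simp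
    moreover have "(-1) ^ length ?L1 * (-1) ^ (r + length ?L1) = ((-1) ^ r :: 'a)" for r
      by (simp add: power_add mult.commute)
    ultimately show ?thesis
      by (simp add: sum_distrib_left mult.assoc[symmetric] del: sum.lessThan_Suc)
  qed
qed

section \<open>Contraction with a linear functional\<close>

text \<open>For the functional h with coordinates h i on V, contract_left m h b is (h \<otimes> id) (\<triangle> b)
and contract_right m h a is (id \<otimes> h) (\<triangle> a).\<close>

definition contract_left :: "nat \<Rightarrow> (nat \<Rightarrow> 'k::field) \<Rightarrow> (nat set \<Rightarrow> 'k) \<Rightarrow> nat set \<Rightarrow> 'k" where
  "contract_left m h b = (\<lambda>Q. \<Sum>i<m. h i * coprod b {i} Q)"

definition contract_right :: "nat \<Rightarrow> (nat \<Rightarrow> 'k::field) \<Rightarrow> (nat set \<Rightarrow> 'k) \<Rightarrow> nat set \<Rightarrow> 'k" where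
  "contract_right m h a = (\<lambda>P. \<Sum>i<m. h i * coprod a P {i})"

lemma contract_right_eq_contract_left:
  "finite P \<Longrightarrow> contract_right m h a P = (-1) ^ card P * contract_left m h a P"
  by (simp add: contract_right_def contract_left_def coprod_singleton_swap sum_distrib_left mult_ac)

lemma contract_left_mu:
  "contract_left m h (mu m us) Q
    = (\<Sum>r<length us. (-1) ^ r * (\<Sum>i<m. h i * (us ! r) i) * mu m (remove_nth r us) Q)"
proof (cases "Q \<subseteq> {..<m} \<and> Suc (card Q) = length us")
  case True
  then obtain n where len: "length us = Suc n" and card_Q: "card Q = n" by auto
  let ?D = "\<lambda>r. minor (remove_nth r us) (sorted_list_of_set Q)"
  have "contract_left m h (mu m us) Q = (\<Sum>i<m. \<Sum>r<Suc n. h i * ((-1) ^ r * (us ! r) i * ?D r))"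
    using True coprod_singleton_mu[OF len _ card_Q]
    by (simp add: contract_left_def sum_distrib_left del: sum.lessThan_Suc)
  also have "\<dots> = (\<Sum>r<Suc n. (-1) ^ r * (\<Sum>i<m. h i * (us ! r) i) * ?D r)"
    by (subst sum.swap) (simp add: sum_distrib_left sum_distrib_right mult_ac)
  finally show ?thesis
    using True len by (simp add: mu_eq_minor)
next
  case False
  then have "coprod (mu m us) {i} Q = 0" for i
    by (rule coprod_singleton_mu_eq_0)
  moreover have "mu m (remove_nth r us) Q = 0" if "r < length us" for r
    using False that by (auto simp: mu_def)
  ultimately show ?thesis
    by (simp add: contract_left_def)
qed

lemma contract_left_mu_Cons:
  assumes "(\<Sum>i<m. h i * v i) = 1" and "\<forall>w\<in>set ws. (\<Sum>i<m. h i * w i) = 0"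
  shows "contract_left m h (mu m (v # ws)) = mu m ws"
proof
  fix Q
  have "(\<Sum>i<m. h i * (ws ! r) i) = 0" if "r < length ws" for r
    using assms(2) that by simp
  then show "contract_left m h (mu m (v # ws)) Q = mu m ws Q"
    unfolding contract_left_mu length_Cons sum.lessThan_Suc_shift
    using assms(1) by (simp add: remove_nth_def)
qed

lemma contract_right_mu_snoc:
  assumes h_v: "(\<Sum>i<m. h i * v i) = 1" and h_vs: "\<forall>w\<in>set vs. (\<Sum>i<m. h i * w i) = 0"
  shows "contract_right m h (mu m (vs @ [v])) = mu m vs"
proof
  fix P
  let ?n = "length vs"
  show "contract_right m h (mu m (vs @ [v])) P = mu m vs P"
  proof (cases "P \<subseteq> {..<m}")
    case True
    then have "finite P" using finite_subset by blast
    have "contract_left m h (mu m (vs @ [v])) P = (-1) ^ ?n * mu m vs P"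
      using h_v h_vs by (simp add: contract_left_mu nth_append remove_nth_def)
    then show ?thesis
      using \<open>finite P\<close> by (auto simp: contract_right_eq_contract_left mu_def
        simp flip: power_add mult.assoc)
  next
    case False
    then show ?thesis
      by (auto simp: contract_right_def coprod_def mu_def intro!: sum.neutral)
  qed
qed

section \<open>Cyclic forms\<close>

lemma form_expand_right: "(\<Sum>Q\<in>Pow {..<m}. c Q * form m g a (basisC Q)) = form m g a c"
proof -
  have "form m g a (basisC Q) = (\<Sum>S\<in>Pow {..<m}. a S * g S Q)" if "Q \<in> Pow {..<m}" for Q
  proof -
    have "a S * basisC Q T * g S T = (if Q = T then a S * g S T else 0)" for S T
      by (simp add: basisC_def)
    then show ?thesis using that by (simp add: form_def)
  qed
  then have "(\<Sum>Q\<in>Pow {..<m}. c Q * form m g a (basisC Q))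
      = (\<Sum>Q\<in>Pow {..<m}. \<Sum>S\<in>Pow {..<m}. a S * c Q * g S Q)"
    by (simp add: sum_distrib_left mult_ac)
  also have "\<dots> = form m g a c" unfolding form_def by (rule sum.swap)
  finally show ?thesis .
qed

lemma form_expand_left: "(\<Sum>P\<in>Pow {..<m}. c P * form m g (basisC P) b) = form m g c b"
proof -
  have "form m g (basisC P) b = (\<Sum>T\<in>Pow {..<m}. b T * g P T)" if "P \<in> Pow {..<m}" for P
  proof -
    have "form m g (basisC P) b
        = (\<Sum>S\<in>Pow {..<m}. if S = P then (\<Sum>T\<in>Pow {..<m}. b T * g S T) else 0)"
      unfolding form_def by (intro sum.cong refl) (simp add: basisC_def)
    then show ?thesis using that by simp
  qed
  then show ?thesis
    by (simp add: form_def sum_distrib_left mult_ac)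
qed

lemma sum_weighted_swap:
  fixes h :: "'a \<Rightarrow> 'k::comm_semiring_0"
  shows "(\<Sum>y\<in>A. (\<Sum>x\<in>B. h x * c x y) * f y) = (\<Sum>x\<in>B. h x * (\<Sum>y\<in>A. c x y * f y))"
  unfolding sum_distrib_left sum_distrib_right mult.assoc by (rule sum.swap)

lemma cyclic_form_contract_adjoint:
  assumes cyc: "cyclic_form m g" and a: "a \<in> carrierC m" and b: "b \<in> carrierC m"
  shows "form m g a (contract_left m h b) = form m g (contract_right m h a) b"
proof -
  have cyc_i: "(\<Sum>Q\<in>Pow {..<m}. coprod b {i} Q * form m g a (basisC Q))
      = (\<Sum>P\<in>Pow {..<m}. coprod a P {i} * form m g (basisC P) b)" for i
    using fun_cong[OF cyc[unfolded cyclic_form_def, rule_format, OF a b]] by metis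
  have "form m g a (contract_left m h b)
      = (\<Sum>Q\<in>Pow {..<m}. contract_left m h b Q * form m g a (basisC Q))"
    by (rule form_expand_right[symmetric])
  also have "\<dots> = (\<Sum>i<m. h i * (\<Sum>Q\<in>Pow {..<m}. coprod b {i} Q * form m g a (basisC Q)))"
    unfolding contract_left_def by (rule sum_weighted_swap)
  also have "\<dots> = (\<Sum>i<m. h i * (\<Sum>P\<in>Pow {..<m}. coprod a P {i} * form m g (basisC P) b))"
    by (simp only: cyc_i)
  also have "\<dots> = (\<Sum>P\<in>Pow {..<m}. contract_right m h a P * form m g (basisC P) b)"
    unfolding contract_right_def by (rule sum_weighted_swap[symmetric])
  also have "\<dots> = form m g (contract_right m h a) b"
    by (rule form_expand_left)
  finally show ?thesis .
qed

lemma mu_in_carrierC: "mu m us \<in> carrierC m"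
  by (auto simp: carrierC_def mu_def)

theorem proposition9p2:
  fixes m :: nat and d :: int and g :: "nat set \<Rightarrow> nat set \<Rightarrow> 'k::field_char_0"
    and vs ws :: "(nat \<Rightarrow> 'k) list" and v :: "nat \<Rightarrow> 'k"
  assumes "m \<ge> 1"
    and "of_degree m d g" and "symmetric_form m g" and "cyclic_form m g"
    and "set vs \<subseteq> vecV m" and "set ws \<subseteq> vecV m" and "v \<in> vecV m"
    and "lin_indep vs" and "lin_indep ws"
    and "\<not> in_span v (vs @ ws)"
  shows "form m g (mu m (vs @ [v])) (mu m ws) = form m g (mu m vs) (mu m (v # ws))"
proof -
  obtain h where h_v: "(\<Sum>i<m. h i * v i) = 1"
    and h_vs_ws: "\<forall>w\<in>set (vs @ ws). (\<Sum>i<m. h i * w i) = 0"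
    using separating_functional[of "vs @ ws" m v] assms(5-7,10) by auto
  have "contract_left m h (mu m (v # ws)) = mu m ws"
    by (rule contract_left_mu_Cons[OF h_v]) (use h_vs_ws in simp)
  moreover have "contract_right m h (mu m (vs @ [v])) = mu m vs"
    by (rule contract_right_mu_snoc[OF h_v]) (use h_vs_ws in simp)
  ultimately show ?thesis
    using cyclic_form_contract_adjoint[OF assms(4) mu_in_carrierC mu_in_carrierC] by metis
qed

end
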